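(* Let $p$ be a binary-coded probability distribution and fix an integer $n\ge1$. Run the algorithm GenOpt described below on $p$. Let $B_n$ denote the first $n$ bits appended to $b$, and $C_n$ the number of random bits drawn up to and including the point when the $n$-th bit is appended. Then for all $s\in\{0,1\}^n$ and $\ell\ge0$, $\Pr(B_n=s,\,C_n=\ell)=2^{-\ell}\,\mathbf{1}\big[[p(s)]_\ell=1\big]$.
   Context: A binary-coded probability distribution is a map $p:\{0,1\}^*\to[0,1]$ with $p(\varepsilon)=1$ ($\varepsilon$ the empty string) and $p(b)=p(b0)+p(b1)$ for every finite binary string $b$. Every real $z\in[0,1]$ has a unique concise binary expansion $z=(z_0.z_1z_2\ldots)_2=\sum_{i\ge0}z_i2^{-i}$ not ending in an infinite string of 1s; write $[z]_i:=z_i$. Algorithm GenOpt: it maintains a string $b$ (initially empty) and a counter $\ell$ (initially $0$) of fair random bits drawn, and repeats forever the following round, which appends one bit to $b$: if $[p(b0)]_\ell=1$ and $[p(b1)]_\ell=0$, append $0$; else if $[p(b0)]_\ell=0$ and $[p(b1)]_\ell=1$, append $1$; otherwise repeat: draw a fair random bit $x$ and set $\ell\leftarrow\ell+1$; if $x=0$ and $[p(b0)]_\ell=1$, append $0$ and end the round; if $x=1$ and $[p(b1)]_\ell=1$, append $1$ and end the round. *)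

theory Defs
  imports "HOL-Probability.Probability"
begin

text \<open>Binary strings are bool lists; False encodes bit 0, True encodes bit 1.\<close>

definition binary_coded_distribution :: "(bool list \<Rightarrow> real) \<Rightarrow> bool" where
  "binary_coded_distribution p \<longleftrightarrow>
     (\<forall>b. 0 \<le> p b \<and> p b \<le> 1) \<and> p [] = 1 \<and>
     (\<forall>b. p b = p (b @ [False]) + p (b @ [True]))"

text \<open>i-th digit of the concise binary expansion z = z0.z1z2..., z in [0,1]
  (expansion not ending in infinitely many 1s); True means digit 1.\<close>
definition bdigit :: "real \<Rightarrow> nat \<Rightarrow> bool" where
  "bdigit z i \<longleftrightarrow> \<lfloor>z * 2 ^ i\<rfloor> mod 2 = 1"

text \<open>Inner loop of a round of GenOpt. x is the sequence of fair random bits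
  (x k is the (k+1)-th bit drawn). genopt_inner p x b l l' c: starting the inner loop
  with string b and counter l, the loop ends with counter l' after appending bit c.\<close>
inductive genopt_inner :: "(bool list \<Rightarrow> real) \<Rightarrow> (nat \<Rightarrow> bool) \<Rightarrow> bool list \<Rightarrow> nat \<Rightarrow> nat \<Rightarrow> bool \<Rightarrow> bool"
  for p x where
  stop0: "\<not> x l \<Longrightarrow> bdigit (p (b @ [False])) (Suc l) \<Longrightarrow> genopt_inner p x b l (Suc l) False"
| stop1: "x l \<Longrightarrow> bdigit (p (b @ [True])) (Suc l) \<Longrightarrow> genopt_inner p x b l (Suc l) True"
| cont: "\<not> (\<not> x l \<and> bdigit (p (b @ [False])) (Suc l)) \<Longrightarrow>
         \<not> (x l \<and> bdigit (p (b @ [True])) (Suc l)) \<Longrightarrow>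
         genopt_inner p x b (Suc l) l' c \<Longrightarrow> genopt_inner p x b l l' c"

text \<open>genopt_run p x n b l: after n rounds of GenOpt driven by the random bits x,
  the string is b and the counter of drawn random bits is l.\<close>
inductive genopt_run :: "(bool list \<Rightarrow> real) \<Rightarrow> (nat \<Rightarrow> bool) \<Rightarrow> nat \<Rightarrow> bool list \<Rightarrow> nat \<Rightarrow> bool"
  for p x where
  init: "genopt_run p x 0 [] 0"
| app0: "genopt_run p x n b l \<Longrightarrow> bdigit (p (b @ [False])) l \<Longrightarrow> \<not> bdigit (p (b @ [True])) l \<Longrightarrow>
         genopt_run p x (Suc n) (b @ [False]) l"
| app1: "genopt_run p x n b l \<Longrightarrow> \<not> bdigit (p (b @ [False])) l \<Longrightarrow> bdigit (p (b @ [True])) l \<Longrightarrow>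
         genopt_run p x (Suc n) (b @ [True]) l"
| draw: "genopt_run p x n b l \<Longrightarrow>
         \<not> (bdigit (p (b @ [False])) l \<and> \<not> bdigit (p (b @ [True])) l) \<Longrightarrow>
         \<not> (\<not> bdigit (p (b @ [False])) l \<and> bdigit (p (b @ [True])) l) \<Longrightarrow>
         genopt_inner p x b l l' c \<Longrightarrow> genopt_run p x (Suc n) (b @ [c]) l'"

definition coins :: "(nat \<Rightarrow> bool) measure" where
  "coins = (\<Pi>\<^sub>M i\<in>(UNIV::nat set). measure_pmf (bernoulli_pmf (1/2)))"

end

theory Submission
  imports Defs
begin

(* Induct on the output string b: the set of random bit sequences for which GenOpt has output b
   after exactly l fair bits is either empty or the cylinder of a single word of length l, and it
   is nonempty iff digit l of p(b) is 1; such a cylinder has probability 2^-l.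

   For the step from b to b c write p(b) = p(b0) + p(b1). After k drawn bits, the round that
   appends the next bit is still running for exactly one word of length k if adding the binary
   expansions of p(b0) and p(b1) produces a carry into digit k, and for no word otherwise. The
   invariant follows the full-adder recursion for that carry, from the most significant digit
   down: a carry into digit k with exactly one summand having digit k+1 equal to 1 forces a carry
   into digit k+1, and the round continues iff the random bit avoids that summand; with both
   digits 1 the round stops, and with both digits 0 there is no carry into digit k. *)

(* The carry into digit k when adding the binary expansions of a and c. *)
definition carry :: "real \<Rightarrow> real \<Rightarrow> nat \<Rightarrow> bool" where
  "carry a c k \<longleftrightarrow> \<lfloor>(a + c) * 2 ^ k\<rfloor> \<noteq> \<lfloor>a * 2 ^ k\<rfloor> + \<lfloor>c * 2 ^ k\<rfloor>"

lemma of_bool_carry: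
  "(of_bool (carry a c k) :: int) = \<lfloor>(a + c) * 2 ^ k\<rfloor> - \<lfloor>a * 2 ^ k\<rfloor> - \<lfloor>c * 2 ^ k\<rfloor>"
  unfolding carry_def distrib_right floor_add[of "a * 2 ^ k"] by simp

lemma carry_commute: "carry a c k = carry c a k"
  unfolding carry_def by (simp add: add.commute)

lemma of_bool_bdigit_Suc:
  "(of_bool (bdigit z (Suc k)) :: int) = \<lfloor>z * 2 ^ Suc k\<rfloor> - 2 * \<lfloor>z * 2 ^ k\<rfloor>"
proof -
  have double: "z * 2 ^ Suc k = z * 2 ^ k + z * 2 ^ k" by simp
  show ?thesis unfolding bdigit_def double floor_add by simp
qed

lemma of_bool_bdigit_0:
  assumes "0 \<le> z" "z \<le> 1"
  shows "(of_bool (bdigit z 0) :: int) = \<lfloor>z\<rfloor>"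
proof (cases "z = 1")
  case False
  then have "\<lfloor>z\<rfloor> = 0" using assms by (simp add: floor_eq_iff)
  then show ?thesis by (simp add: bdigit_def)
qed (simp add: bdigit_def)

lemma full_adder_iff:
  "((of_bool s :: int) + 2 * of_bool k = of_bool a + of_bool c + of_bool k') \<longleftrightarrow>
     (s \<longleftrightarrow> (a \<longleftrightarrow> (c \<longleftrightarrow> k'))) \<and> (k \<longleftrightarrow> a \<and> c \<or> (a \<or> c) \<and> k')"
  by (cases s; cases k; cases a; cases c; cases k') simp_all

lemma bdigit_add_0:
  assumes "0 \<le> a" "0 \<le> c" "a + c \<le> 1"
  shows "bdigit (a + c) 0 \<longleftrightarrow> (bdigit a 0 \<longleftrightarrow> (bdigit c 0 \<longleftrightarrow> carry a c 0))" (is ?digit)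
    and "\<not> (bdigit a 0 \<and> bdigit c 0 \<or> (bdigit a 0 \<or> bdigit c 0) \<and> carry a c 0)" (is ?no_carry)
proof -
  have "(of_bool (bdigit (a + c) 0) :: int) + 2 * of_bool False
          = of_bool (bdigit a 0) + of_bool (bdigit c 0) + of_bool (carry a c 0)"
    using assms by (simp add: of_bool_bdigit_0 of_bool_carry)
  then show ?digit ?no_carry
    unfolding full_adder_iff by simp_all
qed

lemma bdigit_add_Suc:
  "bdigit (a + c) (Suc k) \<longleftrightarrow>
     (bdigit a (Suc k) \<longleftrightarrow> (bdigit c (Suc k) \<longleftrightarrow> carry a c (Suc k)))" (is ?digit)
  "carry a c k \<longleftrightarrow>
     bdigit a (Suc k) \<and> bdigit c (Suc k) \<or>
     (bdigit a (Suc k) \<or> bdigit c (Suc k)) \<and> carry a c (Suc k)" (is ?carry)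
proof -
  have "(of_bool (bdigit (a + c) (Suc k)) :: int) + 2 * of_bool (carry a c k)
          = of_bool (bdigit a (Suc k)) + of_bool (bdigit c (Suc k)) + of_bool (carry a c (Suc k))"
    unfolding of_bool_bdigit_Suc of_bool_carry by simp
  then show ?digit ?carry
    unfolding full_adder_iff by simp_all
qed

lemma bdigit_one: "bdigit 1 k \<longleftrightarrow> k = 0"
proof -
  have "\<lfloor>(1::real) * 2 ^ k\<rfloor> = 2 ^ k"
    by (metis floor_of_int mult_1 of_int_numeral of_int_power)
  then show ?thesis by (cases k) (simp_all add: bdigit_def)
qed

definition cylinder_or_empty :: "nat \<Rightarrow> ((nat \<Rightarrow> 'a) \<Rightarrow> bool) \<Rightarrow> bool" where
  "cylinder_or_empty l E \<longleftrightarrow> (\<forall>x y. E x \<longrightarrow> E y = (\<forall>i<l. x i = y i))"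

lemma cylinder_or_empty_conj_const:
  "cylinder_or_empty l E \<Longrightarrow> cylinder_or_empty l (\<lambda>x. E x \<and> P)"
  unfolding cylinder_or_empty_def by blast

lemma cylinder_or_empty_disj:
  assumes "cylinder_or_empty l E" "(\<exists>x. E x) \<longleftrightarrow> P"
    and "cylinder_or_empty l F" "(\<exists>x. F x) \<longleftrightarrow> Q"
    and "\<not> (P \<and> Q)"
  shows "cylinder_or_empty l (\<lambda>x. E x \<or> F x) \<and> ((\<exists>x. E x \<or> F x) \<longleftrightarrow> P \<or> Q)"
  using assms unfolding cylinder_or_empty_def by blast

lemma cylinder_or_empty_extend:
  assumes "cylinder_or_empty l E"
  shows "cylinder_or_empty (Suc l) (\<lambda>x. E x \<and> x l = c)"
  using assms unfolding cylinder_or_empty_def by (auto simp: less_Suc_eq)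

lemma cylinder_or_empty_ex_extend_iff:
  assumes "cylinder_or_empty l E"
  shows "(\<exists>x. E x \<and> x l = c) \<longleftrightarrow> (\<exists>x. E x)"
proof
  assume "\<exists>x. E x"
  then obtain x where "E x" by blast
  then have "E (x(l := c))" using assms unfolding cylinder_or_empty_def by auto
  then show "\<exists>x. E x \<and> x l = c" by force
qed blast

lemma cylinder_or_empty_disj_extend:
  assumes "cylinder_or_empty (Suc j) R" "(\<exists>x. R x) \<longleftrightarrow> r"
    and "cylinder_or_empty j U" "(\<exists>x. U x) \<longleftrightarrow> u"
    and "\<not> (r \<and> P \<and> u \<and> Q)"
  shows "cylinder_or_empty (Suc j) (\<lambda>x. R x \<and> P \<or> (U x \<and> x j = c) \<and> Q) \<and>
         ((\<exists>x. R x \<and> P \<or> (U x \<and> x j = c) \<and> Q) \<longleftrightarrow> r \<and> P \<or> u \<and> Q)"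
proof -
  have ex_R: "(\<exists>x. R x \<and> P) \<longleftrightarrow> r \<and> P"
    using assms(2) by blast
  have ex_U: "(\<exists>x. (U x \<and> x j = c) \<and> Q) \<longleftrightarrow> u \<and> Q"
    using cylinder_or_empty_ex_extend_iff[OF assms(3), of c] assms(4) by blast
  show ?thesis
    by (rule cylinder_or_empty_disj[OF cylinder_or_empty_conj_const[OF assms(1)] ex_R
          cylinder_or_empty_conj_const[OF cylinder_or_empty_extend[OF assms(3)]] ex_U])
      (use assms(5) in blast)
qed

lemma measure_coins_cylinder:
  "measure coins {x \<in> space coins. \<forall>i<l. x i = w i} = (1/2) ^ l"
proof -
  interpret product_prob_space "\<lambda>_. measure_pmf (bernoulli_pmf (1/2))" "UNIV :: nat set"
    by (rule product_prob_spaceI) (simp add: prob_space_measure_pmf)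
  have "emeasure coins {x \<in> space coins. \<forall>i<l. x i = w i}
          = (\<Prod>i\<in>{..<l}. emeasure (measure_pmf (bernoulli_pmf (1/2))) {w i})"
    using emeasure_PiM_Collect[of "{..<l}" "\<lambda>i. {w i}"] unfolding coins_def
    by (simp add: Ball_def)
  also have "\<dots> = ennreal ((1/2) ^ l)"
    by (simp add: emeasure_pmf_single ennreal_power[symmetric] divide_ennreal[symmetric]
                  ennreal_inverse_power[symmetric])
  finally show ?thesis by (simp add: measure_def)
qed

lemma measure_coins_cylinder_or_empty:
  assumes "cylinder_or_empty l E"
  shows "measure coins {x \<in> space coins. E x} = (if \<exists>x. E x then (1/2) ^ l else 0)"
proof (cases "\<exists>x. E x")
  case True
  then obtain w where "E w" by blast
  then have "{x \<in> space coins. E x} = {x \<in> space coins. \<forall>i<l. x i = w i}"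
    using assms unfolding cylinder_or_empty_def by blast
  then show ?thesis using True measure_coins_cylinder by simp
qed simp

(* Driven by x, GenOpt has output b, and the round appending the next bit is still running
   after k random bits have been drawn. *)
inductive round_open :: "(bool list \<Rightarrow> real) \<Rightarrow> (nat \<Rightarrow> bool) \<Rightarrow> bool list \<Rightarrow> nat \<Rightarrow> bool"
  for p x b where
  start: "genopt_run p x (length b) b l \<Longrightarrow> bdigit (p (b @ [False])) l = bdigit (p (b @ [True])) l \<Longrightarrow>
          round_open p x b l"
| draw: "round_open p x b j \<Longrightarrow> \<not> (\<not> x j \<and> bdigit (p (b @ [False])) (Suc j)) \<Longrightarrow>
         \<not> (x j \<and> bdigit (p (b @ [True])) (Suc j)) \<Longrightarrow> round_open p x b (Suc j)"

lemma genopt_inner_round_open: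
  assumes "genopt_inner p x b l l' c" "round_open p x b l"
  shows "\<exists>j. l' = Suc j \<and> round_open p x b j \<and> x j = c \<and> bdigit (p (b @ [c])) l'"
  using assms by (induction rule: genopt_inner.induct) (auto intro: round_open.draw)

lemma round_open_genopt_inner:
  assumes "round_open p x b j" "genopt_inner p x b j l' c"
  shows "genopt_run p x (Suc (length b)) (b @ [c]) l'"
  using assms
proof (induction rule: round_open.induct)
  case (start l)
  then show ?case by (auto intro: genopt_run.draw)
next
  case (draw j)
  then show ?case by (auto intro: genopt_inner.cont)
qed

lemma genopt_run_snoc_iff:
  "genopt_run p x (Suc (length b)) (b @ [c]) m \<longleftrightarrow>
     genopt_run p x (length b) b m \<and> bdigit (p (b @ [c])) m \<and> \<not> bdigit (p (b @ [\<not> c])) m \<or>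
     (\<exists>j. m = Suc j \<and> round_open p x b j \<and> x j = c \<and> bdigit (p (b @ [c])) m)"
  (is "?run \<longleftrightarrow> ?immediate \<or> ?drawn")
proof
  assume ?run
  then show "?immediate \<or> ?drawn"
    by cases (auto intro!: genopt_inner_round_open round_open.start)
next
  assume "?immediate \<or> ?drawn"
  then show ?run
  proof
    assume ?immediate
    then show ?run by (cases c) (auto intro: genopt_run.app0 genopt_run.app1)
  next
    assume ?drawn
    then obtain j where j: "m = Suc j" "round_open p x b j" "x j = c" "bdigit (p (b @ [c])) m"
      by blast
    then have "genopt_inner p x b j m c"
      by (cases c) (auto intro: genopt_inner.stop0 genopt_inner.stop1)
    with j(2) show ?run by (rule round_open_genopt_inner)
  qed
qed

lemma binary_coded_distribution_snoc:
  assumes "binary_coded_distribution p"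
  shows "p b = p (b @ [c]) + p (b @ [\<not> c])" (is ?sum)
    and "0 \<le> p (b @ [c])" (is ?nonneg)
    and "p (b @ [c]) + p (b @ [\<not> c]) \<le> 1" (is ?bounded)
proof -
  have "p b = p (b @ [False]) + p (b @ [True])" and "\<And>b. 0 \<le> p b" and "p b \<le> 1"
    using assms unfolding binary_coded_distribution_def by blast+
  then show ?sum ?nonneg ?bounded
    by (cases c; simp)+
qed

lemma round_open_cylinder:
  assumes bcd: "binary_coded_distribution p"
    and run_cyl: "\<And>m. cylinder_or_empty m (\<lambda>x. genopt_run p x (length b) b m)"
    and run_ex: "\<And>m. (\<exists>x. genopt_run p x (length b) b m) \<longleftrightarrow> bdigit (p b) m"
  shows "cylinder_or_empty k (\<lambda>x. round_open p x b k) \<and>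
         ((\<exists>x. round_open p x b k) \<longleftrightarrow> carry (p (b @ [False])) (p (b @ [True])) k)"
proof -
  let ?aF = "p (b @ [False])" and ?aT = "p (b @ [True])"
  have sum: "p b = ?aF + ?aT" and bounds: "0 \<le> ?aF" "0 \<le> ?aT" "?aF + ?aT \<le> 1"
    using binary_coded_distribution_snoc[OF bcd, of b False]
      binary_coded_distribution_snoc(2)[OF bcd, of b True]
    by simp_all
  show ?thesis
  proof (induction k)
    case 0
    have "round_open p x b 0 \<longleftrightarrow>
            genopt_run p x (length b) b 0 \<and> (bdigit ?aF 0 \<longleftrightarrow> bdigit ?aT 0)" for x
      by (subst round_open.simps) auto
    moreover have "bdigit (p b) 0 \<and> (bdigit ?aF 0 \<longleftrightarrow> bdigit ?aT 0) \<longleftrightarrow> carry ?aF ?aT 0"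
      unfolding sum using bdigit_add_0[OF bounds] by auto
    ultimately show ?case
      using cylinder_or_empty_conj_const[OF run_cyl[of 0]] run_ex[of 0] by simp
  next
    case (Suc k)
    let ?d = "bdigit (p b) (Suc k)" and ?dF = "bdigit ?aF (Suc k)" and ?dT = "bdigit ?aT (Suc k)"
    note adder = bdigit_add_Suc[of ?aF ?aT k, folded sum]
    have "?dF \<or> ?dT" if "round_open p x b k" for x
    proof -
      have "carry ?aF ?aT k" using that Suc.IH by blast
      then show ?thesis using adder(2) by auto
    qed
    then have open_Suc: "round_open p x b (Suc k) \<longleftrightarrow>
        genopt_run p x (length b) b (Suc k) \<and> (?dF \<longleftrightarrow> ?dT) \<or>
        (round_open p x b k \<and> x k = ?dF) \<and> \<not> (?dF \<and> ?dT)" for x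
      by (subst round_open.simps) auto
    have disjoint: "\<not> (?d \<and> (?dF \<longleftrightarrow> ?dT) \<and> carry ?aF ?aT k \<and> \<not> (?dF \<and> ?dT))"
      and carry_Suc: "(?d \<and> (?dF \<longleftrightarrow> ?dT) \<or> carry ?aF ?aT k \<and> \<not> (?dF \<and> ?dT)) \<longleftrightarrow>
                        carry ?aF ?aT (Suc k)"
      using adder by auto
    show ?case
      unfolding open_Suc carry_Suc[symmetric]
      by (rule cylinder_or_empty_disj_extend[OF run_cyl run_ex Suc.IH[THEN conjunct1]
            Suc.IH[THEN conjunct2] disjoint])
  qed
qed

lemma genopt_run_snoc_cylinder:
  assumes bcd: "binary_coded_distribution p"
    and run_cyl: "\<And>m. cylinder_or_empty m (\<lambda>x. genopt_run p x (length b) b m)"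
    and run_ex: "\<And>m. (\<exists>x. genopt_run p x (length b) b m) \<longleftrightarrow> bdigit (p b) m"
  shows "cylinder_or_empty m (\<lambda>x. genopt_run p x (Suc (length b)) (b @ [c]) m) \<and>
         ((\<exists>x. genopt_run p x (Suc (length b)) (b @ [c]) m) \<longleftrightarrow> bdigit (p (b @ [c])) m)"
proof -
  let ?a = "p (b @ [c])" and ?a' = "p (b @ [\<not> c])"
  have sum: "p b = ?a + ?a'" and bounds: "0 \<le> ?a" "0 \<le> ?a'" "?a + ?a' \<le> 1"
    using binary_coded_distribution_snoc[OF bcd, of b c]
      binary_coded_distribution_snoc(2)[OF bcd, of b "\<not> c"]
    by simp_all
  show ?thesis
  proof (cases m)
    case 0
    have "bdigit (p b) 0 \<and> bdigit ?a 0 \<and> \<not> bdigit ?a' 0 \<longleftrightarrow> bdigit ?a 0"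
      unfolding sum using bdigit_add_0[OF bounds] by auto
    then show ?thesis
      unfolding 0 genopt_run_snoc_iff
      using cylinder_or_empty_conj_const[OF run_cyl[of 0]] run_ex[of 0] by simp
  next
    case (Suc j)
    let ?d = "bdigit (p b) (Suc j)" and ?da = "bdigit ?a (Suc j)" and ?da' = "bdigit ?a' (Suc j)"
    note adder = bdigit_add_Suc[of ?a ?a' j, folded sum]
    have round_cyl: "cylinder_or_empty j (\<lambda>x. round_open p x b j)"
      and round_ex: "(\<exists>x. round_open p x b j) \<longleftrightarrow> carry ?a ?a' j"
      using round_open_cylinder[OF bcd run_cyl run_ex, of j] by (cases c; simp add: carry_commute)+
    have run_Suc: "genopt_run p x (Suc (length b)) (b @ [c]) (Suc j) \<longleftrightarrow>
        genopt_run p x (length b) b (Suc j) \<and> ?da \<and> \<not> ?da' \<or>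
        (round_open p x b j \<and> x j = c) \<and> ?da" for x
      unfolding genopt_run_snoc_iff by auto
    have disjoint: "\<not> (?d \<and> (?da \<and> \<not> ?da') \<and> carry ?a ?a' j \<and> ?da)"
      and digit: "(?d \<and> (?da \<and> \<not> ?da') \<or> carry ?a ?a' j \<and> ?da) \<longleftrightarrow> ?da"
      using adder by auto
    show ?thesis
      unfolding Suc run_Suc
      using cylinder_or_empty_disj_extend[OF run_cyl run_ex round_cyl round_ex disjoint]
      unfolding digit .
  qed
qed

lemma genopt_run_cylinder:
  assumes "binary_coded_distribution p"
  shows "cylinder_or_empty m (\<lambda>x. genopt_run p x (length b) b m) \<and>
         ((\<exists>x. genopt_run p x (length b) b m) \<longleftrightarrow> bdigit (p b) m)"
proof (induction b arbitrary: m rule: rev_induct)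
  case Nil
  have "genopt_run p x 0 [] m \<longleftrightarrow> m = 0" for x
    by (auto elim: genopt_run.cases intro: genopt_run.init)
  moreover have "p [] = 1"
    using assms unfolding binary_coded_distribution_def by blast
  ultimately show ?case
    by (simp add: cylinder_or_empty_def bdigit_one)
next
  case (snoc c b)
  then show ?case
    using genopt_run_snoc_cylinder[OF assms] by simp
qed

theorem theoremC4:
  fixes p :: "bool list \<Rightarrow> real" and n :: nat and s :: "bool list" and l :: nat
  assumes "binary_coded_distribution p"
    and "n \<ge> 1"
    and "length s = n"
  shows "measure coins {x \<in> space coins. genopt_run p x n s l}
           = (1/2) ^ l * (if bdigit (p s) l then 1 else 0)"
proof -
  have "cylinder_or_empty l (\<lambda>x. genopt_run p x n s l)"
    and "(\<exists>x. genopt_run p x n s l) \<longleftrightarrow> bdigit (p s) l"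
    using genopt_run_cylinder[OF assms(1), of l s] assms(3) by simp_all
  then show ?thesis by (simp add: measure_coins_cylinder_or_empty)
qed

end
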